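(* Let $0<i_1<i_2<\cdots<i_L$ be integers and $\mathcal S=\{x_0,x_{i_1},\ldots,x_{i_L}\}$, with corresponding restricted right-arm rotation distance $d_{RRA}^{\mathcal S}$. Then for every integer $n>i_L+4$ there exist finite rooted binary trees $T_1,T_2$, each with $n$ nodes, such that $d_{RRA}^{\mathcal S}(T_1,T_2)$ is defined and $d_{RRA}^{\mathcal S}(T_1,T_2)\ge 4n-4i_L-4$.
   Context: Trees: finite rooted binary trees, each internal vertex (node) having a left and a right child. The right arm consists of the root and all nodes reachable from the root by a path of right edges; the level of a node is its distance from the root. Right rotation at a node $N$ whose left child $M$ is a node (with $A,B$ the subtrees of $M$, $C$ the right subtree of $N$) replaces the subtree at $N$ by one whose root has left subtree $A$ and right child a node with left subtree $B$ and right subtree $C$; left rotation at $N$ is the inverse. Rotations preserve the number of nodes. $d_{RRA}^{\mathcal S}(T_1,T_2)$ is the minimal number of rotations, each at a right-arm node at one of the levels $0,i_1,\ldots,i_L$, required to transform $T_1$ into $T_2$; it is defined when such a sequence exists. *)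

theory Defs
  imports Main
begin

datatype bintree = Leaf | Node bintree bintree

fun nodes :: "bintree \<Rightarrow> nat" where
  "nodes Leaf = 0"
| "nodes (Node l r) = Suc (nodes l + nodes r)"

fun rot_right :: "bintree \<Rightarrow> bintree option" where
  "rot_right (Node (Node A B) C) = Some (Node A (Node B C))"
| "rot_right _ = None"

fun rot_left :: "bintree \<Rightarrow> bintree option" where
  "rot_left (Node A (Node B C)) = Some (Node (Node A B) C)"
| "rot_left _ = None"

fun at_arm :: "nat \<Rightarrow> (bintree \<Rightarrow> bintree option) \<Rightarrow> bintree \<Rightarrow> bintree option" where
  "at_arm 0 f t = f t"
| "at_arm (Suc k) f (Node l r) = map_option (Node l) (at_arm k f r)"
| "at_arm (Suc k) f Leaf = None"

definition rra_step :: "nat set \<Rightarrow> bintree \<Rightarrow> bintree \<Rightarrow> bool" where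
  "rra_step S t t' \<longleftrightarrow>
     (\<exists>k\<in>S. at_arm k rot_right t = Some t' \<or> at_arm k rot_left t = Some t')"

definition rra_defined :: "nat set \<Rightarrow> bintree \<Rightarrow> bintree \<Rightarrow> bool" where
  "rra_defined S T1 T2 \<longleftrightarrow> (\<exists>m. (rra_step S ^^ m) T1 T2)"

definition d_RRA :: "nat set \<Rightarrow> bintree \<Rightarrow> bintree \<Rightarrow> nat" where
  "d_RRA S T1 T2 = (LEAST m. (rra_step S ^^ m) T1 T2)"

end

theory Submission
  imports Defs
begin

text \<open>
List the nodes of a tree in in-order and label each by an integer and by the flag
``its right child is a leaf''. The node at level \<open>j\<close> of the right arm gets \<open>h j\<close>; a node in
the subtree hanging to the left of it gets \<open>g j + 1\<close> plus one for every left edge and two for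
every right edge on its path from that subtree's root. For suitable \<open>g\<close>, \<open>h\<close>, determined by
the allowed levels, every allowed rotation moves each label by at most one, and a node loses
its flag only at a rotation at an allowed level \<open>K\<close>, when its own label is \<open>g K + 1\<close> and its
in-order successor receives \<open>h (K + 1)\<close>; both are \<open>O(i\<^sub>L)\<close>. In the two trees used below one
node at the bottom of a long right path is flagged in \<open>T\<^sub>1\<close> and not in \<open>T\<^sub>2\<close>; its label in
\<open>T\<^sub>1\<close> and its successor's label in \<open>T\<^sub>2\<close> are both about \<open>2n\<close>. So before the flag is lost
the first label has to come down to \<open>O(i\<^sub>L)\<close>, and afterwards the second has to climb back up
to about \<open>2n\<close>. The two trees are joined through a common tree using rotations at the levels
\<open>0\<close> and \<open>i\<^sub>1\<close> only.
\<close>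

section \<open>Rotations along the right arm\<close>

lemma at_arm_rot_left_iff: "at_arm k rot_left t = Some t' \<longleftrightarrow> at_arm k rot_right t' = Some t"
proof (induction k arbitrary: t t')
  case 0
  then show ?case by (cases t rule: rot_left.cases; cases t' rule: rot_right.cases) auto
next
  case (Suc k)
  then show ?case by (cases t; cases t') auto
qed

lemma symp_rra_step: "symp (rra_step S)"
  unfolding symp_def rra_step_def at_arm_rot_left_iff by blast

lemma nodes_at_arm_rot_right: "at_arm k rot_right t = Some t' \<Longrightarrow> nodes t' = nodes t"
proof (induction k arbitrary: t t')
  case 0
  then show ?case by (cases t rule: rot_right.cases) auto
next
  case (Suc k)
  then show ?case by (cases t) auto
qed

lemma nodes_rra_step: "rra_step S t t' \<Longrightarrow> nodes t' = nodes t"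
  by (auto simp: rra_step_def at_arm_rot_left_iff dest: nodes_at_arm_rot_right)

lemma nodes_relpowp_rra_step: "(rra_step S ^^ s) t t' \<Longrightarrow> nodes t' = nodes t"
  by (induction s arbitrary: t') (auto dest: nodes_rra_step)

lemma rra_defined_if_rtranclp: "(rra_step S)\<^sup>*\<^sup>* T1 T2 \<Longrightarrow> rra_defined S T1 T2"
  unfolding rra_defined_def by (rule rtranclp_imp_relpowp)

lemma relpowp_d_RRA: "rra_defined S T1 T2 \<Longrightarrow> (rra_step S ^^ d_RRA S T1 T2) T1 T2"
  unfolding rra_defined_def d_RRA_def by (rule LeastI_ex)

section \<open>Joining the two witness trees\<close>

definition spine :: "bintree list \<Rightarrow> bintree" where
  "spine ts = foldr Node ts Leaf"

fun left_comb :: "nat \<Rightarrow> bintree" where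
  "left_comb 0 = Leaf"
| "left_comb (Suc k) = Node (left_comb k) Leaf"

fun right_comb :: "nat \<Rightarrow> bintree \<Rightarrow> bintree" where
  "right_comb 0 X = X"
| "right_comb (Suc k) X = Node Leaf (right_comb k X)"

lemma nodes_left_comb [simp]: "nodes (left_comb k) = k"
  by (induction k) auto

lemma nodes_right_comb [simp]: "nodes (right_comb k X) = k + nodes X"
  by (induction k) auto

lemma right_comb_add: "right_comb k (right_comb l X) = right_comb (k + l) X"
  by (induction k) auto

lemma at_arm_foldr_Node:
  "at_arm (length pre) f (foldr Node pre t) = map_option (foldr Node pre) (f t)"
  by (induction pre) (auto simp: option.map_comp comp_def option.map_ident)

lemma rra_step_split:
  assumes "length pre \<in> S"
  shows "rra_step S (spine (pre @ Node A B # ts)) (spine (pre @ A # B # ts))"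
proof -
  have "at_arm (length pre) rot_right (spine (pre @ Node A B # ts)) = Some (spine (pre @ A # B # ts))"
    by (simp add: spine_def at_arm_foldr_Node)
  then show ?thesis
    using assms unfolding rra_step_def by blast
qed

lemma rra_step_merge:
  assumes "0 \<in> S"
  shows "rra_step S (spine (A # B # ts)) (spine (Node A B # ts))"
proof -
  have "at_arm 0 rot_left (spine (A # B # ts)) = Some (spine (Node A B # ts))"
    by (simp add: spine_def)
  then show ?thesis
    using assms unfolding rra_step_def by blast
qed

lemma unfold_left_comb:
  assumes "length pre \<in> S"
  shows "(rra_step S)\<^sup>*\<^sup>* (spine (pre @ left_comb k # ts)) (spine (pre @ replicate (Suc k) Leaf @ ts))"
proof (induction k arbitrary: ts)
  case 0
  then show ?case by simp
next
  case (Suc k)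
  have "rra_step S (spine (pre @ left_comb (Suc k) # ts)) (spine (pre @ left_comb k # Leaf # ts))"
    using rra_step_split[OF assms] by simp
  moreover have "(rra_step S)\<^sup>*\<^sup>* (spine (pre @ left_comb k # Leaf # ts))
      (spine (pre @ replicate (Suc (Suc k)) Leaf @ ts))"
    using Suc.IH[of "Leaf # ts"] by (simp add: replicate_app_Cons_same)
  ultimately show ?case
    by (rule converse_rtranclp_into_rtranclp)
qed

lemma merge_leaves:
  assumes "0 \<in> S"
  shows "(rra_step S)\<^sup>*\<^sup>* (spine (left_comb t # replicate k Leaf @ ts)) (spine (left_comb (t + k) # ts))"
proof (induction k arbitrary: t)
  case 0
  then show ?case by simp
next
  case (Suc k)
  have "rra_step S (spine (left_comb t # replicate (Suc k) Leaf @ ts))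
      (spine (left_comb (Suc t) # replicate k Leaf @ ts))"
    using rra_step_merge[OF assms] by simp
  then show ?case
    using Suc.IH[of "Suc t"] by (simp add: converse_rtranclp_into_rtranclp)
qed

lemma absorb_right_comb:
  assumes "0 \<in> S" "Suc r \<in> S"
  shows "(rra_step S)\<^sup>*\<^sup>* (spine (left_comb t # replicate r Leaf @ right_comb k X # ts))
    (spine (left_comb (t + k) # replicate r Leaf @ X # ts))"
proof (induction k arbitrary: t)
  case 0
  then show ?case by simp
next
  case (Suc k)
  have "rra_step S (spine ((left_comb t # replicate r Leaf) @ Node Leaf (right_comb k X) # ts))
      (spine ((left_comb t # replicate r Leaf) @ Leaf # right_comb k X # ts))"
    by (rule rra_step_split) (simp add: assms(2))
  moreover have "rra_step S (spine (left_comb t # Leaf # replicate r Leaf @ right_comb k X # ts))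
      (spine (left_comb (Suc t) # replicate r Leaf @ right_comb k X # ts))"
    using rra_step_merge[OF assms(1)] by simp
  ultimately show ?case
    using Suc.IH[of "Suc t"]
    by (simp add: replicate_app_Cons_same converse_rtranclp_into_rtranclp)
qed

definition witness_tree :: "nat \<Rightarrow> nat \<Rightarrow> bintree \<Rightarrow> bintree" where
  "witness_tree q d X = Node (Node (left_comb q) (right_comb d X)) Leaf"

lemma nodes_witness_tree: "nodes (witness_tree q d X) = q + d + 2 + nodes X"
  by (simp add: witness_tree_def)

lemma witness_tree_reduces:
  assumes "0 \<in> S" "Suc q \<in> S"
  shows "(rra_step S)\<^sup>*\<^sup>* (witness_tree q d X) (spine (left_comb d # replicate q Leaf @ [X]))"
proof -
  have "rra_step S (witness_tree q d X) (spine ([] @ left_comb q # right_comb d X # []))"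
    using rra_step_split[of "[]" S "left_comb q" "right_comb d X" "[]"] assms(1)
    by (simp add: witness_tree_def spine_def)
  also have "(rra_step S)\<^sup>*\<^sup>* \<dots> (spine ([] @ replicate (Suc q) Leaf @ [right_comb d X]))"
    by (rule unfold_left_comb) (simp add: assms(1))
  also have "\<dots> = spine (left_comb 0 # replicate q Leaf @ right_comb d X # [])"
    by simp
  also have "(rra_step S)\<^sup>*\<^sup>* \<dots> (spine (left_comb (0 + d) # replicate q Leaf @ X # []))"
    by (rule absorb_right_comb[OF assms])
  finally show ?thesis
    by simp
qed

lemma witness_trees_connected:
  assumes "0 \<in> S" "Suc q \<in> S"
  shows "(rra_step S)\<^sup>*\<^sup>* (witness_tree q d (left_comb 2)) (witness_tree q d (right_comb 2 Leaf))"
proof -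
  have "(rra_step S)\<^sup>*\<^sup>* (witness_tree q d (left_comb 2))
      (spine ((left_comb d # replicate q Leaf) @ [left_comb 2]))"
    using witness_tree_reduces[OF assms] by simp
  also have "(rra_step S)\<^sup>*\<^sup>* \<dots> (spine ((left_comb d # replicate q Leaf) @ replicate (Suc 2) Leaf @ []))"
    by (rule unfold_left_comb) (simp add: assms(2))
  also have "\<dots> = spine (left_comb d # replicate 2 Leaf @ replicate (Suc q) Leaf)"
    by (simp add: numeral_2_eq_2 replicate_app_Cons_same)
  also have "(rra_step S)\<^sup>*\<^sup>* \<dots> (spine (left_comb (d + 2) # replicate (Suc q) Leaf))"
    by (rule merge_leaves[OF assms(1)])
  also have "\<dots> = spine (left_comb (d + 2) # replicate q Leaf @ [Leaf])"
    by (simp add: replicate_append_same)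
  also have "(rra_step S)\<^sup>*\<^sup>* \<dots> (witness_tree q (d + 2) Leaf)"
    using witness_tree_reduces[OF assms] by (meson sympD symp_rra_step symp_rtranclp)
  finally show ?thesis
    by (simp add: witness_tree_def right_comb_add)
qed

section \<open>Labels\<close>

type_synonym label = "int \<times> bool"

definition shift_labels :: "int \<Rightarrow> label list \<Rightarrow> label list" where
  "shift_labels c = map (\<lambda>(v, b). (v + c, b))"

lemma shift_labels_simps [simp]:
  "shift_labels c [] = []"
  "shift_labels c ((v, b) # xs) = (v + c, b) # shift_labels c xs"
  "shift_labels c (xs @ ys) = shift_labels c xs @ shift_labels c ys"
  "shift_labels c (shift_labels c' xs) = shift_labels (c' + c) xs"
  "length (shift_labels c xs) = length xs"
  by (induction xs) (auto simp: shift_labels_def)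

lemma nth_shift_labels:
  "i < length xs \<Longrightarrow> shift_labels c xs ! i = (fst (xs ! i) + c, snd (xs ! i))"
  by (simp add: shift_labels_def split: prod.splits)

fun subtree_labels :: "bintree \<Rightarrow> label list" where
  "subtree_labels Leaf = []"
| "subtree_labels (Node l r) =
     shift_labels 1 (subtree_labels l) @ [(0, r = Leaf)] @ shift_labels 2 (subtree_labels r)"

fun arm_labels :: "(nat \<Rightarrow> int) \<Rightarrow> (nat \<Rightarrow> int) \<Rightarrow> nat \<Rightarrow> bintree \<Rightarrow> label list"
  where
  "arm_labels g h j Leaf = []"
| "arm_labels g h j (Node l r) =
     shift_labels (g j + 1) (subtree_labels l) @ [(h j, r = Leaf)] @ arm_labels g h (Suc j) r"

lemma length_subtree_labels [simp]: "length (subtree_labels t) = nodes t"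
  by (induction t) auto

lemma length_arm_labels [simp]: "length (arm_labels g h j t) = nodes t"
  by (induction t arbitrary: j) auto

text \<open>How the labels may change under one right rotation at an allowed level.\<close>

definition label_step ::
    "nat set \<Rightarrow> (nat \<Rightarrow> int) \<Rightarrow> (nat \<Rightarrow> int) \<Rightarrow> label list \<Rightarrow> label list \<Rightarrow> bool"
  where
  "label_step S g h xs ys \<longleftrightarrow> length xs = length ys \<and>
    (\<forall>i<length xs. \<bar>fst (xs ! i) - fst (ys ! i)\<bar> \<le> 1 \<and>
      (snd (ys ! i) \<longrightarrow> snd (xs ! i)) \<and>
      (snd (xs ! i) \<and> \<not> snd (ys ! i) \<longrightarrow>
        (\<exists>K\<in>S. fst (xs ! i) = g K + 1 \<and> Suc i < length xs \<and> fst (ys ! Suc i) = h (Suc K))))"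

lemma all_less_length_append:
  "(\<forall>i<length (xs @ ys). P i) \<longleftrightarrow>
    (\<forall>i<length xs. P i) \<and> (\<forall>j<length ys. P (length xs + j))"
  by (auto, metis add_diff_inverse_nat nat_add_left_cancel_less)

lemma label_step_append:
  assumes "label_step S g h xs ys" and "label_step S g h xs' ys'"
  shows "label_step S g h (xs @ xs') (ys @ ys')"
proof -
  have "length xs = length ys"
    using assms(1) by (simp add: label_step_def)
  then show ?thesis
    using assms unfolding label_step_def all_less_length_append by (auto simp: nth_append) (meson Suc_lessD)
qed

lemma label_step_refl: "label_step S g h xs xs"
  by (simp add: label_step_def)

lemma label_step_shift_labels:
  "\<bar>a - b\<bar> \<le> 1 \<Longrightarrow> label_step S g h (shift_labels a xs) (shift_labels b xs)"
  by (auto simp: label_step_def nth_shift_labels)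

lemma label_step_single: "\<bar>a - b\<bar> \<le> 1 \<Longrightarrow> label_step S g h [(a, f)] [(b, f)]"
  by (auto simp: label_step_def)

lemma label_step_lose_flag:
  assumes "K \<in> S" "\<bar>g K + 1 - h K\<bar> \<le> 1" "\<bar>h K - h (Suc K)\<bar> \<le> 1"
  shows "label_step S g h [(g K + 1, True), (h K, f)] [(h K, False), (h (Suc K), f)]"
  using assms unfolding label_step_def by (auto simp: less_Suc_eq)

locale label_potential =
  fixes S :: "nat set" and g h :: "nat \<Rightarrow> int"
  assumes g_step_allowed: "K \<in> S \<Longrightarrow> 1 \<le> g (Suc K) - g K \<and> g (Suc K) - g K \<le> 3"
    and g_lipschitz: "1 \<le> j \<Longrightarrow> \<bar>g (Suc j) - g j\<bar> \<le> 1"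
    and h_near_g_allowed: "K \<in> S \<Longrightarrow> \<bar>g K + 1 - h K\<bar> \<le> 1"
    and h_lipschitz: "\<bar>h j - h (Suc j)\<bar> \<le> 1"
begin

lemma label_step_arm_labels_Suc:
  "1 \<le> j \<Longrightarrow> label_step S g h (arm_labels g h j t) (arm_labels g h (Suc j) t)"
proof (induction t arbitrary: j)
  case Leaf
  then show ?case by (simp add: label_step_refl)
next
  case (Node l r)
  have "label_step S g h (shift_labels (g j + 1) (subtree_labels l))
      (shift_labels (g (Suc j) + 1) (subtree_labels l))"
    using g_lipschitz[OF Node.prems] by (intro label_step_shift_labels) simp
  moreover have "label_step S g h [(h j, r = Leaf)] [(h (Suc j), r = Leaf)]"
    using h_lipschitz[of j] by (intro label_step_single) simp
  moreover have "label_step S g h (arm_labels g h (Suc j) r) (arm_labels g h (Suc (Suc j)) r)"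
    using Node.IH(2) by simp
  ultimately show ?case
    unfolding arm_labels.simps by (intro label_step_append)
qed

lemma label_step_rot_right_root:
  assumes "rot_right t = Some t'" "j \<in> S"
  shows "label_step S g h (arm_labels g h j t) (arm_labels g h j t')"
proof -
  obtain A B C where t: "t = Node (Node A B) C" and t': "t' = Node A (Node B C)"
    using assms(1) by (cases t rule: rot_right.cases) auto
  have left: "label_step S g h (shift_labels (g j + 2) (subtree_labels A))
      (shift_labels (g j + 1) (subtree_labels A))"
    by (intro label_step_shift_labels) simp
  have right: "label_step S g h (arm_labels g h (Suc j) C) (arm_labels g h (Suc (Suc j)) C)"
    by (intro label_step_arm_labels_Suc) simp
  show ?thesis
  proof (cases "B = Leaf")
    case True
    have "arm_labels g h j t = shift_labels (g j + 2) (subtree_labels A) @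
        [(g j + 1, True), (h j, C = Leaf)] @ arm_labels g h (Suc j) C"
      using t True by (simp add: algebra_simps)
    moreover have "arm_labels g h j t' = shift_labels (g j + 1) (subtree_labels A) @
        [(h j, False), (h (Suc j), C = Leaf)] @ arm_labels g h (Suc (Suc j)) C"
      using t' True by simp
    moreover have "label_step S g h [(g j + 1, True), (h j, C = Leaf)] [(h j, False), (h (Suc j), C = Leaf)]"
      using h_near_g_allowed[OF assms(2)] h_lipschitz[of j] by (intro label_step_lose_flag assms(2))
    ultimately show ?thesis
      using left right by (simp only: label_step_append)
  next
    case False
    have "arm_labels g h j t = shift_labels (g j + 2) (subtree_labels A) @
        ([(g j + 1, False)] @ shift_labels (g j + 3) (subtree_labels B) @ [(h j, C = Leaf)]) @
        arm_labels g h (Suc j) C"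
      using t False by (simp add: algebra_simps)
    moreover have "arm_labels g h j t' = shift_labels (g j + 1) (subtree_labels A) @
        ([(h j, False)] @ shift_labels (g (Suc j) + 1) (subtree_labels B) @ [(h (Suc j), C = Leaf)]) @
        arm_labels g h (Suc (Suc j)) C"
      using t' by (simp add: algebra_simps)
    moreover have "label_step S g h
        ([(g j + 1, False)] @ shift_labels (g j + 3) (subtree_labels B) @ [(h j, C = Leaf)])
        ([(h j, False)] @ shift_labels (g (Suc j) + 1) (subtree_labels B) @ [(h (Suc j), C = Leaf)])"
      using h_near_g_allowed[OF assms(2)] g_step_allowed[OF assms(2)] h_lipschitz[of j]
      by (intro label_step_append label_step_single label_step_shift_labels) auto
    ultimately show ?thesis
      using left right by (simp only: label_step_append)
  qed
qed

lemma label_step_rot_right: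
  "at_arm k rot_right t = Some t' \<Longrightarrow> j + k \<in> S \<Longrightarrow>
    label_step S g h (arm_labels g h j t) (arm_labels g h j t')"
proof (induction k arbitrary: j t t')
  case 0
  then show ?case by (simp add: label_step_rot_right_root)
next
  case (Suc k)
  then obtain l r r' where t: "t = Node l r" and t': "t' = Node l r'" and r: "at_arm k rot_right r = Some r'"
    by (cases t) auto
  have "(r' = Leaf) = (r = Leaf)"
    using nodes_at_arm_rot_right[OF r] by (cases r; cases r') auto
  moreover have "label_step S g h (arm_labels g h (Suc j) r) (arm_labels g h (Suc j) r')"
    using Suc.IH[OF r] Suc.prems(2) by simp
  ultimately show ?case
    using t t' by (simp only: arm_labels.simps) (intro label_step_append label_step_refl)
qed

abbreviation labels :: "bintree \<Rightarrow> label list" where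
  "labels t \<equiv> arm_labels g h 0 t"

lemma rra_step_label_step:
  assumes "rra_step S t t'"
  shows "label_step S g h (labels t) (labels t') \<or> label_step S g h (labels t') (labels t)"
  using assms label_step_rot_right[of _ t t' 0] label_step_rot_right[of _ t' t 0]
  unfolding rra_step_def at_arm_rot_left_iff by auto

lemma labels_relpowp_close:
  assumes "(rra_step S ^^ s) t u" "i < nodes t"
  shows "\<bar>fst (labels t ! i) - fst (labels u ! i)\<bar> \<le> int s"
  using assms
proof (induction s arbitrary: u)
  case 0
  then show ?case by simp
next
  case (Suc s)
  then obtain v where tv: "(rra_step S ^^ s) t v" and vu: "rra_step S v u"
    by auto
  have "i < nodes v"
    using nodes_relpowp_rra_step[OF tv] Suc.prems(2) by simp
  then have "\<bar>fst (labels v ! i) - fst (labels u ! i)\<bar> \<le> 1"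
    using rra_step_label_step[OF vu] by (auto simp: label_step_def abs_minus_commute)
  then show ?case
    using Suc.IH[OF tv Suc.prems(2)] by linarith
qed

lemma lost_right_leaf_bound:
  assumes bound: "\<And>K. K \<in> S \<Longrightarrow> g K + h (Suc K) \<le> M"
    and "(rra_step S ^^ s) t u" "snd (labels t ! i)" "\<not> snd (labels u ! i)" "Suc i < nodes t"
  shows "fst (labels t ! i) + fst (labels u ! Suc i) \<le> M + int s"
  using assms(2-)
proof (induction s arbitrary: u)
  case 0
  then show ?case by simp
next
  case (Suc s)
  then obtain v where tv: "(rra_step S ^^ s) t v" and vu: "rra_step S v u"
    by auto
  have nodes_v: "nodes v = nodes t"
    using nodes_relpowp_rra_step[OF tv] .
  show ?case
  proof (cases "snd (labels v ! i)")
    case True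
    \<comment> \<open>A left rotation never removes a flag, so the last step is a right rotation.\<close>
    have "label_step S g h (labels v) (labels u)"
      using rra_step_label_step[OF vu] True Suc.prems(3) Suc.prems(4) nodes_v
      by (auto simp: label_step_def)
    then obtain K where "K \<in> S" "fst (labels v ! i) = g K + 1" "fst (labels u ! Suc i) = h (Suc K)"
      using True Suc.prems(3,4) nodes_v unfolding label_step_def length_arm_labels
      by (metis Suc_lessD)
    moreover have "\<bar>fst (labels t ! i) - fst (labels v ! i)\<bar> \<le> int s"
      using labels_relpowp_close[OF tv] Suc.prems(4) by simp
    ultimately show ?thesis
      using bound by force
  next
    case False
    have "fst (labels t ! i) + fst (labels v ! Suc i) \<le> M + int s"
      using Suc.IH[OF tv Suc.prems(2) False Suc.prems(4)] .
    moreover have "\<bar>fst (labels v ! Suc i) - fst (labels u ! Suc i)\<bar> \<le> 1"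
      using rra_step_label_step[OF vu] Suc.prems(4) nodes_v
      by (auto simp: label_step_def abs_minus_commute)
    ultimately show ?thesis
      by linarith
  qed
qed

end

section \<open>The lower bound\<close>

text \<open>Allowed levels lie in \<open>{0} \<union> {p..m}\<close>. The offset \<open>g\<close> has to rise across every allowed
level; to keep it small there it falls from \<open>g 1 = 1\<close> by one per level down to \<open>2 - p\<close> at
level \<open>p\<close>, and rises by one per level afterwards.\<close>

definition witness_offset :: "nat \<Rightarrow> nat \<Rightarrow> int" where
  "witness_offset p j = (if j = 0 then 0 else \<bar>int j - int p\<bar> + 2 - int p)"

definition witness_arm :: "nat \<Rightarrow> nat \<Rightarrow> nat \<Rightarrow> int" where
  "witness_arm p m j = (if j \<le> m then witness_offset p j else witness_offset p m - (int j - int m))"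

lemma label_potential_witness:
  assumes "1 \<le> p" "p \<le> m" "S \<subseteq> insert 0 {p..m}"
  shows "label_potential S (witness_offset p) (witness_arm p m)"
proof
  fix K assume "K \<in> S"
  then have K: "K = 0 \<or> p \<le> K \<and> K \<le> m"
    using assms(3) by auto
  show "1 \<le> witness_offset p (Suc K) - witness_offset p K \<and>
      witness_offset p (Suc K) - witness_offset p K \<le> 3"
    using assms(1) K by (auto simp: witness_offset_def)
  show "\<bar>witness_offset p K + 1 - witness_arm p m K\<bar> \<le> 1"
    using assms(2) K by (auto simp: witness_arm_def)
next
  fix j :: nat assume "1 \<le> j"
  then show "\<bar>witness_offset p (Suc j) - witness_offset p j\<bar> \<le> 1"
    by (auto simp: witness_offset_def)
next
  fix j
  show "\<bar>witness_arm p m j - witness_arm p m (Suc j)\<bar> \<le> 1"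
    using assms(1,2) by (auto simp: witness_arm_def witness_offset_def)
qed

lemma witness_potential_bound:
  assumes "1 \<le> p" "p \<le> m" "S \<subseteq> insert 0 {p..m}" "K \<in> S"
  shows "witness_offset p K + witness_arm p m (Suc K) \<le> 4 * int m - 4 * int p + 1"
  using assms by (auto simp: witness_arm_def witness_offset_def)

lemma subtree_labels_right_comb:
  "\<exists>P. length P = d \<and> subtree_labels (right_comb d X) = P @ shift_labels (2 * int d) (subtree_labels X)"
proof (induction d)
  case 0
  then show ?case by (simp add: shift_labels_def)
next
  case (Suc d)
  then obtain P where "length P = d" "subtree_labels (right_comb d X) = P @ shift_labels (2 * int d) (subtree_labels X)"
    by blast
  then show ?case
    by (intro exI[of _ "(0, right_comb d X = Leaf) # shift_labels 2 P"]) (simp add: add.commute)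
qed

lemma arm_labels_witness_tree:
  "\<exists>P. length P = q + d + 1 \<and>
    arm_labels g h 0 (witness_tree q d X) = P @ shift_labels (2 * int d + g 0 + 3) (subtree_labels X) @ [(h 0, True)]"
proof -
  obtain P where P: "length P = d" "subtree_labels (right_comb d X) = P @ shift_labels (2 * int d) (subtree_labels X)"
    using subtree_labels_right_comb by blast
  show ?thesis
    by (intro exI[of _ "shift_labels (g 0 + 2) (subtree_labels (left_comb q)) @
        [(g 0 + 1, right_comb d X = Leaf)] @ shift_labels (g 0 + 3) P"])
      (simp add: witness_tree_def P algebra_simps)
qed

lemma witness_trees_rotation_count:
  assumes "1 \<le> p" "p \<le> m" "S \<subseteq> insert 0 {p..m}"
    and "(rra_step S ^^ s) (witness_tree q d (left_comb 2)) (witness_tree q d (right_comb 2 Leaf))"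
  shows "4 * int d + 4 * int p + 8 \<le> 4 * int m + int s"
proof -
  interpret label_potential S "witness_offset p" "witness_arm p m"
    by (rule label_potential_witness[OF assms(1-3)])
  obtain P1 where P1: "length P1 = q + d + 1"
    "labels (witness_tree q d (left_comb 2)) = P1 @ [(2 * int d + 4, True), (2 * int d + 3, True), (0, True)]"
    using arm_labels_witness_tree[of q d "witness_offset p" "witness_arm p m" "left_comb 2"]
    by (auto simp: numeral_2_eq_2 witness_offset_def witness_arm_def algebra_simps)
  obtain P2 where P2: "length P2 = q + d + 1"
    "labels (witness_tree q d (right_comb 2 Leaf)) = P2 @ [(2 * int d + 3, False), (2 * int d + 5, True), (0, True)]"
    using arm_labels_witness_tree[of q d "witness_offset p" "witness_arm p m" "right_comb 2 Leaf"]
    by (auto simp: numeral_2_eq_2 witness_offset_def witness_arm_def algebra_simps)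
  have "fst (labels (witness_tree q d (left_comb 2)) ! (q + d + 1))
      + fst (labels (witness_tree q d (right_comb 2 Leaf)) ! Suc (q + d + 1))
      \<le> 4 * int m - 4 * int p + 1 + int s"
    by (rule lost_right_leaf_bound[OF witness_potential_bound[OF assms(1-3)] assms(4)])
      (use P1 P2 in \<open>simp_all add: nth_append nodes_witness_tree\<close>)
  then show ?thesis
    using P1 P2 by (simp add: nth_append)
qed

lemma sorted_wrt_less_hd_le:
  "sorted_wrt (<) xs \<Longrightarrow> k \<in> set xs \<Longrightarrow> hd xs \<le> (k::nat)"
  by (cases xs) auto

lemma sorted_wrt_less_le_last:
  "sorted_wrt (<) xs \<Longrightarrow> k \<in> set xs \<Longrightarrow> k \<le> last (xs::nat list)"
  by (induction xs) (auto simp: less_imp_le)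

theorem theorem3p9:
  fixes ii :: "nat list" and n :: nat
  assumes "ii \<noteq> []"
    and "sorted_wrt (<) ii"
    and "0 < hd ii"
    and "n > last ii + 4"
  shows "\<exists>T1 T2. nodes T1 = n \<and> nodes T2 = n
           \<and> rra_defined (insert 0 (set ii)) T1 T2
           \<and> d_RRA (insert 0 (set ii)) T1 T2 \<ge> 4 * n - 4 * last ii - 4"
proof -
  define p m S where "p = hd ii" and "m = last ii" and "S = insert 0 (set ii)"
  have "1 \<le> p"
    using assms(3) by (simp add: p_def)
  have allowed: "S \<subseteq> insert 0 {p..m}"
    using sorted_wrt_less_hd_le[OF assms(2)] sorted_wrt_less_le_last[OF assms(2)]
    by (auto simp: S_def p_def m_def)
  have "p \<in> S"
    using assms(1) by (simp add: S_def p_def)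
  then have "p \<le> m"
    using allowed \<open>1 \<le> p\<close> by auto
  define q d where "q = p - 1" and "d = n - p - 3"
  define T1 T2 where "T1 = witness_tree q d (left_comb 2)"
    and "T2 = witness_tree q d (right_comb 2 Leaf)"
  have "nodes T1 = n" "nodes T2 = n"
    using \<open>1 \<le> p\<close> \<open>p \<le> m\<close> assms(4)
    by (simp_all add: T1_def T2_def nodes_witness_tree q_def d_def m_def)
  moreover have defined: "rra_defined S T1 T2"
    using witness_trees_connected[of S q d] \<open>1 \<le> p\<close> \<open>p \<in> S\<close>
    by (intro rra_defined_if_rtranclp) (simp add: T1_def T2_def S_def q_def)
  moreover have "4 * int d + 4 * int p + 8 \<le> 4 * int m + int (d_RRA S T1 T2)"
    using witness_trees_rotation_count[OF \<open>1 \<le> p\<close> \<open>p \<le> m\<close> allowed]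
      relpowp_d_RRA[OF defined]
    by (simp add: T1_def T2_def)
  then have "4 * n - 4 * m - 4 \<le> d_RRA S T1 T2"
    using \<open>p \<le> m\<close> assms(4) by (simp add: d_def m_def)
  ultimately show ?thesis
    unfolding S_def m_def by blast
qed

end
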